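(* Let $G$ be a $6$-regular graph, $\mathcal S$ a canonical path partition of $G$, and let $x_1,x_2\in V_2$ be path neighbors on a path component $P$. Suppose both $x_1$ and $x_2$ go to vertices of the same cycle component $C$. Then for every spanning cycle $H$ of the subgraph of $G$ induced on $V(C)$, there are no vertices $a,b\in V(C)$ such that $x_1$ goes to $a$, $x_2$ goes to $b$, and $a,b$ are consecutive on $H$. Moreover, if $|V(C)|\le 6$, then the number of balanced edges between $\{x_1,x_2\}$ and $V(C)$ is at most $|V(C)|$ (equivalently, $\{x_1,x_2\}$ transfer in total at most $1$ point to $C$ when each such balanced edge carries $1/|V(C)|$ points).
   Context: All graphs are finite, simple and undirected. A path partition of $G=(V,E)$ is a set of vertex-disjoint paths (single vertices allowed) covering $V$; its members are components. A component with $t\ge3$ vertices is a cycle component if the subgraph induced on its vertex set has a spanning cycle; a one-vertex component is an isolated vertex; every other component is a path component. A path partition is canonical if (1) it has the minimum number of components among all path partitions of $G$; (2) among those, it has the maximum number of cycle components; (3) it has no isolated vertices. Given a canonical path partition $\mathcal S$ of $G$: two vertices are path neighbors if they are consecutive on a path component. An edge of $G$ is a free edge unless it joins two path neighbors or has both endpoints in the same cycle component. $V_1$ is the set of end-vertices of path components together with all vertices of cycle components. $V_2$ is the set of vertices not in $V_1$ that are joined by a free edge to a vertex of $V_1$. A balanced edge is a free edge with one endpoint in $V_1$ and the other in $V_2$; for $x\in V_2$, $y\in V_1$ we say $x$ goes to $y$ if $xy$ is a balanced edge. *)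

theory Defs
  imports Main
begin

definition simple_graph :: "'a set \<Rightarrow> ('a \<Rightarrow> 'a \<Rightarrow> bool) \<Rightarrow> bool" where
  "simple_graph V E \<longleftrightarrow> finite V \<and> (\<forall>u v. E u v \<longrightarrow> u \<in> V \<and> v \<in> V)
     \<and> (\<forall>u v. E u v \<longrightarrow> E v u) \<and> (\<forall>u. \<not> E u u)"

definition regular :: "nat \<Rightarrow> 'a set \<Rightarrow> ('a \<Rightarrow> 'a \<Rightarrow> bool) \<Rightarrow> bool" where
  "regular k V E \<longleftrightarrow> (\<forall>v\<in>V. card {u\<in>V. E v u} = k)"

definition is_path :: "'a set \<Rightarrow> ('a \<Rightarrow> 'a \<Rightarrow> bool) \<Rightarrow> 'a list \<Rightarrow> bool" where
  "is_path V E p \<longleftrightarrow> p \<noteq> [] \<and> distinct p \<and> set p \<subseteq> V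
     \<and> (\<forall>i. Suc i < length p \<longrightarrow> E (p ! i) (p ! Suc i))"

definition path_partition :: "'a set \<Rightarrow> ('a \<Rightarrow> 'a \<Rightarrow> bool) \<Rightarrow> 'a list set \<Rightarrow> bool" where
  "path_partition V E S \<longleftrightarrow> (\<forall>p\<in>S. is_path V E p)
     \<and> (\<forall>p\<in>S. \<forall>q\<in>S. p \<noteq> q \<longrightarrow> set p \<inter> set q = {})
     \<and> (\<Union>p\<in>S. set p) = V"

definition spanning_cycle :: "('a \<Rightarrow> 'a \<Rightarrow> bool) \<Rightarrow> 'a set \<Rightarrow> 'a list \<Rightarrow> bool" where
  "spanning_cycle E W H \<longleftrightarrow> distinct H \<and> set H = W \<and> 3 \<le> length H
     \<and> (\<forall>i<length H. E (H ! i) (H ! ((Suc i) mod length H)))"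

definition cycle_component :: "('a \<Rightarrow> 'a \<Rightarrow> bool) \<Rightarrow> 'a list \<Rightarrow> bool" where
  "cycle_component E p \<longleftrightarrow> 3 \<le> length p \<and> (\<exists>H. spanning_cycle E (set p) H)"

definition num_cycle_components :: "('a \<Rightarrow> 'a \<Rightarrow> bool) \<Rightarrow> 'a list set \<Rightarrow> nat" where
  "num_cycle_components E S = card {p\<in>S. cycle_component E p}"

definition canonical :: "'a set \<Rightarrow> ('a \<Rightarrow> 'a \<Rightarrow> bool) \<Rightarrow> 'a list set \<Rightarrow> bool" where
  "canonical V E S \<longleftrightarrow> path_partition V E S
     \<and> (\<forall>S'. path_partition V E S' \<longrightarrow> card S \<le> card S')
     \<and> (\<forall>S'. path_partition V E S' \<and> card S' = card S
            \<longrightarrow> num_cycle_components E S' \<le> num_cycle_components E S)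
     \<and> (\<forall>p\<in>S. length p \<noteq> 1)"

definition path_nbrs :: "('a \<Rightarrow> 'a \<Rightarrow> bool) \<Rightarrow> 'a list set \<Rightarrow> 'a \<Rightarrow> 'a \<Rightarrow> bool" where
  "path_nbrs E S u v \<longleftrightarrow> (\<exists>p\<in>S. \<not> cycle_component E p
     \<and> (\<exists>i. Suc i < length p \<and> {p ! i, p ! Suc i} = {u, v}))"

definition same_cycle :: "('a \<Rightarrow> 'a \<Rightarrow> bool) \<Rightarrow> 'a list set \<Rightarrow> 'a \<Rightarrow> 'a \<Rightarrow> bool" where
  "same_cycle E S u v \<longleftrightarrow> (\<exists>p\<in>S. cycle_component E p \<and> u \<in> set p \<and> v \<in> set p)"

definition free_edge :: "('a \<Rightarrow> 'a \<Rightarrow> bool) \<Rightarrow> 'a list set \<Rightarrow> 'a \<Rightarrow> 'a \<Rightarrow> bool" where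
  "free_edge E S u v \<longleftrightarrow> E u v \<and> \<not> path_nbrs E S u v \<and> \<not> same_cycle E S u v"

definition V1 :: "('a \<Rightarrow> 'a \<Rightarrow> bool) \<Rightarrow> 'a list set \<Rightarrow> 'a set" where
  "V1 E S = {v. \<exists>p\<in>S. (\<not> cycle_component E p \<and> (v = hd p \<or> v = last p))
                     \<or> (cycle_component E p \<and> v \<in> set p)}"

definition V2 :: "'a set \<Rightarrow> ('a \<Rightarrow> 'a \<Rightarrow> bool) \<Rightarrow> 'a list set \<Rightarrow> 'a set" where
  "V2 V E S = {x\<in>V. x \<notin> V1 E S \<and> (\<exists>y\<in>V1 E S. free_edge E S x y)}"

text \<open>x goes to y: xy is a balanced edge with x in V2 and y in V1.\<close>
definition goes_to :: "'a set \<Rightarrow> ('a \<Rightarrow> 'a \<Rightarrow> bool) \<Rightarrow> 'a list set \<Rightarrow> 'a \<Rightarrow> 'a \<Rightarrow> bool" where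
  "goes_to V E S x y \<longleftrightarrow> x \<in> V2 V E S \<and> y \<in> V1 E S \<and> free_edge E S x y"

definition consec_on_cycle :: "'a list \<Rightarrow> 'a \<Rightarrow> 'a \<Rightarrow> bool" where
  "consec_on_cycle H a b \<longleftrightarrow> (\<exists>i<length H. {H ! i, H ! ((Suc i) mod length H)} = {a, b})"

end

theory Submission imports Defs begin

text \<open>
If x1 went to a and x2 to b with a, b consecutive on a spanning cycle H of C, then
opening H at the edge ab gives a Hamiltonian path of C from a to b, which can be spliced
into the path component between x1 and x2. This merges two components into one and
contradicts the minimality of the canonical partition. Consequently the successor on H of a
vertex receiving an edge from x1 never receives an edge from x2; since the successor map
is injective, the numbers of vertices of C reached from x1 and from x2 add up to at
most |V(C)|.
\<close>

lemma is_path_iff_successively: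
  "is_path V E p \<longleftrightarrow> p \<noteq> [] \<and> distinct p \<and> set p \<subseteq> V \<and> successively E p"
  unfolding is_path_def successively_conv_nth by blast

lemma consec_on_cycle_commute: "consec_on_cycle H a b \<longleftrightarrow> consec_on_cycle H b a"
  unfolding consec_on_cycle_def by (simp add: insert_commute)

lemma spanning_cycle_rotate_path:
  assumes H: "spanning_cycle E W H" and j: "j < length H"
  defines "Q \<equiv> rotate (Suc j) H"
  shows "distinct Q \<and> set Q = W \<and> Q \<noteq> [] \<and> hd Q = H ! (Suc j mod length H)
           \<and> last Q = H ! j \<and> successively E Q"
proof -
  let ?n = "length H"
  have n3: "3 \<le> ?n" and lQ: "length Q = ?n" using H by (auto simp: spanning_cycle_def Q_def)
  then have n_pos: "0 < ?n" by linarith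
  have Q_nth: "Q ! k = H ! ((Suc j + k) mod ?n)" if "k < ?n" for k
    unfolding Q_def using that by (rule nth_rotate)
  have "distinct Q" "set Q = W" using H by (simp_all add: Q_def spanning_cycle_def)
  moreover have "Q \<noteq> []" using n3 lQ by auto
  moreover have "hd Q = H ! (Suc j mod ?n)"
    using \<open>Q \<noteq> []\<close> Q_nth[OF n_pos] by (simp add: hd_conv_nth)
  moreover have "last Q = H ! j"
  proof -
    have "Suc j + (?n - 1) = j + ?n" using n3 by simp
    then show ?thesis using \<open>Q \<noteq> []\<close> lQ n3 j by (simp add: last_conv_nth Q_nth)
  qed
  moreover have "successively E Q"
    unfolding successively_conv_nth
  proof (intro allI impI)
    fix i assume i: "Suc i < length Q"
    let ?m = "(Suc j + i) mod ?n"
    have "?m < ?n" using n_pos by simp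
    then have "E (H ! ?m) (H ! (Suc ?m mod ?n))" using H unfolding spanning_cycle_def by blast
    moreover have "Suc ?m mod ?n = (Suc j + Suc i) mod ?n" by (simp add: mod_Suc_eq)
    ultimately show "E (Q ! i) (Q ! Suc i)" using i lQ by (simp add: Q_nth)
  qed
  ultimately show ?thesis by blast
qed

lemma consec_on_cycle_hamiltonian_path:
  assumes H: "spanning_cycle E W H" and sym: "\<And>u v. E u v \<Longrightarrow> E v u"
    and ab: "consec_on_cycle H a b"
  obtains Q where "distinct Q" "set Q = W" "Q \<noteq> []" "hd Q = a" "last Q = b" "successively E Q"
proof -
  obtain j where j: "j < length H" and e: "{H ! j, H ! (Suc j mod length H)} = {a, b}"
    using ab unfolding consec_on_cycle_def by blast
  obtain Q where Q: "distinct Q" "set Q = W" "Q \<noteq> []" "hd Q = H ! (Suc j mod length H)"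
      "last Q = H ! j" "successively E Q"
    using spanning_cycle_rotate_path[OF H j] by blast
  have "successively E (rev Q)" using Q(6) sym by (auto intro: successively_mono)
  then show thesis using e Q that[of Q] that[of "rev Q"]
    by (auto simp: doubleton_eq_iff hd_rev last_rev)
qed

lemma path_partition_finite:
  assumes "path_partition V E S" "finite V"
  shows "finite S"
proof -
  have "inj_on set S"
  proof (rule inj_onI)
    fix p q assume "p \<in> S" "q \<in> S" "set p = set q"
    moreover have "p \<noteq> []" using \<open>p \<in> S\<close> assms(1) by (auto simp: path_partition_def is_path_def)
    ultimately show "p = q" using assms(1) unfolding path_partition_def by (metis Int_absorb set_empty)
  qed
  moreover have "set ` S \<subseteq> Pow V" using assms(1) unfolding path_partition_def by auto
  ultimately show ?thesis using assms(2) by (meson finite_Pow_iff finite_imageD rev_finite_subset)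
qed

lemma path_partition_splice:
  assumes S: "path_partition V E S" and P: "P \<in> S" and C: "C \<in> S" "P \<noteq> C"
    and i: "Suc i < length P"
    and Q: "distinct Q" "set Q = set C" "Q \<noteq> []" "successively E Q"
    and first: "E (P ! i) (hd Q)" and final: "E (last Q) (P ! Suc i)"
  shows "path_partition V E (insert (take (Suc i) P @ Q @ drop (Suc i) P) (S - {P, C}))"
proof -
  define T where "T = take (Suc i) P"
  define D where "D = drop (Suc i) P"
  define N where "N = T @ Q @ D"
  have pathP: "is_path V E P" and pathC: "is_path V E C" and PC: "set P \<inter> set C = {}"
    using S P C unfolding path_partition_def by blast+
  have TD: "T @ D = P" by (simp add: T_def D_def)
  have T: "T \<noteq> []" "last T = P ! i" using i by (simp_all add: T_def take_Suc_conv_app_nth)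
  have D: "D \<noteq> []" "hd D = P ! Suc i" using i by (simp_all add: D_def hd_drop_conv_nth)
  have setN: "set N = set P \<union> set C" using TD Q(2) unfolding N_def by auto
  have "successively E T" "successively E D"
    using pathP TD by (metis is_path_iff_successively successively_append_iff)+
  then have "successively E N"
    using Q T D first final by (simp add: N_def successively_append_iff)
  moreover have "distinct N" using pathP TD Q(1,2) PC unfolding N_def is_path_def by auto
  ultimately have pathN: "is_path V E N"
    using setN pathP pathC T(1) by (auto simp: is_path_iff_successively N_def)
  have "(\<Union>p\<in>S. set p) = set P \<union> set C \<union> (\<Union>p\<in>S - {P, C}. set p)" using P C by blast
  then have cover: "(\<Union>p\<in>insert N (S - {P, C}). set p) = V"
    using S setN unfolding path_partition_def by simp
  have disjN: "set N \<inter> set r = {}" if "r \<in> S - {P, C}" for r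
    using S P C setN that unfolding path_partition_def by blast
  have "path_partition V E (insert N (S - {P, C}))"
    unfolding path_partition_def
  proof (intro conjI)
    show "\<forall>p\<in>insert N (S - {P, C}). is_path V E p" using S pathN by (auto simp: path_partition_def)
    show "\<forall>p\<in>insert N (S - {P, C}). \<forall>q\<in>insert N (S - {P, C}). p \<noteq> q \<longrightarrow> set p \<inter> set q = {}"
    proof (intro ballI impI)
      fix p q assume "p \<in> insert N (S - {P, C})" "q \<in> insert N (S - {P, C})" "p \<noteq> q"
      then show "set p \<inter> set q = {}"
        using S disjN unfolding path_partition_def by blast
    qed
  qed (rule cover)
  then show ?thesis by (simp add: N_def T_def D_def)
qed

lemma card_insert_Diff_two_less:
  assumes "finite S" "P \<in> S" "C \<in> S" "P \<noteq> C"
  shows "card (insert N (S - {P, C})) < card S"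
proof -
  have "card (insert N (S - {P, C})) \<le> Suc (card (S - {P, C}))"
    using assms(1) by (simp add: card_insert_if)
  also have "card (S - {P, C}) = card S - 2" using assms by (simp add: card_Diff_subset)
  also have "card {P, C} \<le> card S" using assms by (intro card_mono) auto
  then have "Suc (card S - 2) < card S" using assms(4) by simp
  finally show ?thesis .
qed

lemma canonical_no_cycle_insertion:
  assumes G: "simple_graph V E" and can: "canonical V E S"
    and P: "P \<in> S" and C: "C \<in> S" "P \<noteq> C" and i: "Suc i < length P"
    and H: "spanning_cycle E (set C) H"
    and a: "E (P ! i) a" and b: "E (P ! Suc i) b" and ab: "consec_on_cycle H a b"
  shows False
proof -
  have S: "path_partition V E S" and minimal: "\<And>S'. path_partition V E S' \<Longrightarrow> card S \<le> card S'"
    using can unfolding canonical_def by blast+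
  have sym: "\<And>u v. E u v \<Longrightarrow> E v u" and "finite V" using G unfolding simple_graph_def by auto
  obtain Q where Q: "distinct Q" "set Q = set C" "Q \<noteq> []" "hd Q = a" "last Q = b" "successively E Q"
    using consec_on_cycle_hamiltonian_path[OF H sym ab] by blast
  let ?S' = "insert (take (Suc i) P @ Q @ drop (Suc i) P) (S - {P, C})"
  have "E (last Q) (P ! Suc i)" using sym[OF b] Q(5) by simp
  then have "path_partition V E ?S'"
    using path_partition_splice[OF S P C i Q(1-3,6)] a Q(4) by simp
  moreover have "card ?S' < card S"
    using card_insert_Diff_two_less[OF path_partition_finite[OF S \<open>finite V\<close>] P C] .
  ultimately show False using minimal[of ?S'] by linarith
qed

lemma card_no_consecutive_le:
  assumes H: "distinct H" and A: "A \<subseteq> set H" and B: "B \<subseteq> set H"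
    and no_consec: "\<And>a b. a \<in> A \<Longrightarrow> b \<in> B \<Longrightarrow> \<not> consec_on_cycle H a b"
  shows "card A + card B \<le> length H"
proof -
  let ?n = "length H"
  define IA where "IA = {k. k < ?n \<and> H ! k \<in> A}"
  have AIA: "A = nth H ` IA"
  proof
    show "A \<subseteq> nth H ` IA"
    proof
      fix c assume "c \<in> A"
      moreover obtain k where "k < ?n" "H ! k = c" using \<open>c \<in> A\<close> A by (metis in_set_conv_nth subsetD)
      ultimately show "c \<in> nth H ` IA" by (auto simp: IA_def)
    qed
  qed (auto simp: IA_def)
  have "inj_on (nth H) IA" "inj_on (nth (rotate1 H)) IA"
    using H by (auto simp: IA_def intro!: inj_on_nth)
  then have cardA: "card A = card (nth (rotate1 H) ` IA)"
    by (simp add: AIA card_image)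
  have succ: "nth (rotate1 H) ` IA \<subseteq> set H - B"
  proof
    fix c assume "c \<in> nth (rotate1 H) ` IA"
    then obtain k where k: "k < ?n" "H ! k \<in> A" "c = H ! (Suc k mod ?n)"
      by (auto simp: IA_def nth_rotate1)
    then have "consec_on_cycle H (H ! k) c" unfolding consec_on_cycle_def by blast
    moreover have "Suc k mod ?n < ?n" using k(1) by (intro mod_less_divisor) linarith
    ultimately show "c \<in> set H - B" using k no_consec by auto
  qed
  have "card A + card B \<le> card (set H - B) + card B"
    using cardA succ by (simp add: card_mono)
  also have "\<dots> = card (set H)" using card_Int_Diff[of "set H" B] B by (simp add: Int_absorb1)
  finally show ?thesis using distinct_card[OF H] by simp
qed

lemma card_pairs_two_le:
  "finite W \<Longrightarrow> card {(x, c). x \<in> {x1, x2} \<and> c \<in> W \<and> R x c}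
     \<le> card {c \<in> W. R x1 c} + card {c \<in> W. R x2 c}"
proof -
  have "{(x, c). x \<in> {x1, x2} \<and> c \<in> W \<and> R x c}
      = {x1} \<times> {c \<in> W. R x1 c} \<union> {x2} \<times> {c \<in> W. R x2 c}" by auto
  then show ?thesis
    using card_Un_le[of "{x1} \<times> {c \<in> W. R x1 c}" "{x2} \<times> {c \<in> W. R x2 c}"]
    by (simp add: card_cartesian_product_singleton)
qed

theorem mainTheorem10:
  fixes V :: "'a set" and E :: "'a \<Rightarrow> 'a \<Rightarrow> bool" and S :: "'a list set"
    and x1 x2 :: 'a and C :: "'a list"
  assumes "simple_graph V E"
    and "regular 6 V E"
    and "canonical V E S"
    and "x1 \<in> V2 V E S" and "x2 \<in> V2 V E S"
    and "path_nbrs E S x1 x2"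
    and "C \<in> S" and "cycle_component E C"
    and "\<exists>a\<in>set C. goes_to V E S x1 a"
    and "\<exists>b\<in>set C. goes_to V E S x2 b"
  shows "(\<forall>H. spanning_cycle E (set C) H \<longrightarrow>
            \<not> (\<exists>a\<in>set C. \<exists>b\<in>set C. goes_to V E S x1 a \<and> goes_to V E S x2 b
                                  \<and> consec_on_cycle H a b))
         \<and> (card (set C) \<le> 6 \<longrightarrow>
            card {(x, c). x \<in> {x1, x2} \<and> c \<in> set C \<and> goes_to V E S x c} \<le> card (set C))"
proof -
  obtain P i where P: "P \<in> S" "\<not> cycle_component E P" and i: "Suc i < length P"
    and x12: "{P ! i, P ! Suc i} = {x1, x2}"
    using assms(6) unfolding path_nbrs_def by blast
  have not_consec: "\<not> consec_on_cycle H a b"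
    if H: "spanning_cycle E (set C) H" and "goes_to V E S x1 a" "goes_to V E S x2 b" for H a b
  proof
    assume ab: "consec_on_cycle H a b"
    then have ba: "consec_on_cycle H b a" by (simp add: consec_on_cycle_commute)
    have "P \<noteq> C" using P assms(8) by blast
    moreover have "E x1 a" "E x2 b" using that by (simp_all add: goes_to_def free_edge_def)
    ultimately show False
      using x12 ab ba canonical_no_cycle_insertion[OF assms(1,3) P(1) assms(7) _ i H]
      by (auto simp: doubleton_eq_iff)
  qed
  obtain H where H: "spanning_cycle E (set C) H"
    using assms(8) unfolding cycle_component_def by blast
  then have "distinct H" and "set H = set C" by (simp_all add: spanning_cycle_def)
  moreover from this have "length H = card (set C)" by (metis distinct_card)
  ultimately have "card {c \<in> set C. goes_to V E S x1 c} + card {c \<in> set C. goes_to V E S x2 c}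
      \<le> card (set C)"
    using card_no_consecutive_le[of H "{c \<in> set C. goes_to V E S x1 c}"
        "{c \<in> set C. goes_to V E S x2 c}"] not_consec[OF H] by auto
  then have "card {(x, c). x \<in> {x1, x2} \<and> c \<in> set C \<and> goes_to V E S x c} \<le> card (set C)"
    using card_pairs_two_le[of "set C" x1 x2 "goes_to V E S"] by simp
  with not_consec show ?thesis by blast
qed

end
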